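(* Let $M$ be a representation of a quiver $Q$ with $\operatorname{Ext}^1(M,M)=0$. Then for every arrow $\alpha\colon x\to y$ of $Q$, the linear map $M_\alpha\colon M_x\to M_y$ is injective or surjective.
   Context: $k$ is a field; $Q$ is a locally finite quiver; representations are finite-dimensional over $k$, and $\operatorname{Ext}^1$ is computed in the category of finite-dimensional representations of $Q$. *)

theory Defs
  imports "Jordan_Normal_Form.Matrix"
begin

text \<open>A finite-dimensional representation over a field 'k assigns to each vertex x the space k^(d x)
 (only finitely many d x nonzero, i.e. finite total dimension) and to each arrow a matrix
 of size d(tgt a) x d(src a).\<close>

definition locally_finite_quiver :: "('a \<Rightarrow> 'v) \<Rightarrow> ('a \<Rightarrow> 'v) \<Rightarrow> bool" where
  "locally_finite_quiver src tgt \<longleftrightarrow>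
     (\<forall>x. finite {a. src a = x} \<and> finite {a. tgt a = x})"

definition is_rep :: "('a \<Rightarrow> 'v) \<Rightarrow> ('a \<Rightarrow> 'v) \<Rightarrow> ('v \<Rightarrow> nat) \<Rightarrow> ('a \<Rightarrow> 'k mat) \<Rightarrow> bool" where
  "is_rep src tgt d \<phi> \<longleftrightarrow>
     finite {x. d x \<noteq> 0} \<and> (\<forall>a. \<phi> a \<in> carrier_mat (d (tgt a)) (d (src a)))"

definition is_morph :: "('a \<Rightarrow> 'v) \<Rightarrow> ('a \<Rightarrow> 'v) \<Rightarrow> ('v \<Rightarrow> nat) \<Rightarrow> ('a \<Rightarrow> 'k::semiring_1 mat)
   \<Rightarrow> ('v \<Rightarrow> nat) \<Rightarrow> ('a \<Rightarrow> 'k mat) \<Rightarrow> ('v \<Rightarrow> 'k mat) \<Rightarrow> bool" where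
  "is_morph src tgt d1 \<phi>1 d2 \<phi>2 f \<longleftrightarrow>
     (\<forall>x. f x \<in> carrier_mat (d2 x) (d1 x)) \<and>
     (\<forall>a. \<phi>2 a * f (src a) = f (tgt a) * \<phi>1 a)"

definition lin_inj :: "nat \<Rightarrow> nat \<Rightarrow> 'k::field mat \<Rightarrow> bool" where
  "lin_inj n m A \<longleftrightarrow> (\<forall>v \<in> carrier_vec n. A *\<^sub>v v = 0\<^sub>v m \<longrightarrow> v = 0\<^sub>v n)"

definition lin_surj :: "nat \<Rightarrow> nat \<Rightarrow> 'k::field mat \<Rightarrow> bool" where
  "lin_surj n m A \<longleftrightarrow> (\<forall>w \<in> carrier_vec m. \<exists>v \<in> carrier_vec n. A *\<^sub>v v = w)"

definition short_exact :: "('a \<Rightarrow> 'v) \<Rightarrow> ('a \<Rightarrow> 'v) \<Rightarrow> ('v \<Rightarrow> nat) \<Rightarrow> ('a \<Rightarrow> 'k::field mat)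
   \<Rightarrow> ('v \<Rightarrow> nat) \<Rightarrow> ('a \<Rightarrow> 'k mat) \<Rightarrow> ('v \<Rightarrow> nat) \<Rightarrow> ('a \<Rightarrow> 'k mat)
   \<Rightarrow> ('v \<Rightarrow> 'k mat) \<Rightarrow> ('v \<Rightarrow> 'k mat) \<Rightarrow> bool" where
  "short_exact src tgt dM \<phi>M dE \<phi>E dN \<phi>N f g \<longleftrightarrow>
     is_morph src tgt dM \<phi>M dE \<phi>E f \<and> is_morph src tgt dE \<phi>E dN \<phi>N g \<and>
     (\<forall>x. lin_inj (dM x) (dE x) (f x)) \<and>
     (\<forall>x. lin_surj (dE x) (dN x) (g x)) \<and>
     (\<forall>x. g x * f x = 0\<^sub>m (dN x) (dM x)) \<and>
     (\<forall>x. \<forall>v \<in> carrier_vec (dE x). g x *\<^sub>v v = 0\<^sub>v (dN x) \<longrightarrow>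
            (\<exists>u \<in> carrier_vec (dM x). f x *\<^sub>v u = v))"

text \<open>Ext^1(N,M) = 0 (Yoneda Ext in the category of finite-dimensional representations):
 every short exact sequence 0 \<rightarrow> M \<rightarrow> E \<rightarrow> N \<rightarrow> 0 of finite-dimensional representations splits.\<close>
definition ext1_vanishes :: "('a \<Rightarrow> 'v) \<Rightarrow> ('a \<Rightarrow> 'v) \<Rightarrow> ('v \<Rightarrow> nat) \<Rightarrow> ('a \<Rightarrow> 'k::field mat)
   \<Rightarrow> ('v \<Rightarrow> nat) \<Rightarrow> ('a \<Rightarrow> 'k mat) \<Rightarrow> bool" where
  "ext1_vanishes src tgt dN \<phi>N dM \<phi>M \<longleftrightarrow>
     (\<forall>dE \<phi>E f g. is_rep src tgt dE \<phi>E \<and> short_exact src tgt dM \<phi>M dE \<phi>E dN \<phi>N f g \<longrightarrow>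
        (\<exists>r. is_morph src tgt dE \<phi>E dM \<phi>M r \<and> (\<forall>x. r x * f x = 1\<^sub>m (dM x))))"

end

theory Submission
  imports Defs
begin

text \<open>
  For representations M, N and any family of linear maps
  eta_b : N_(src b) -> M_(tgt b), the spaces E_x = M_x (+) N_x with structure maps
  [[M_b, eta_b], [0, N_b]] form a representation E which is an extension
  0 -> M -> E -> N -> 0 with the standard inclusion and projection.  A retraction
  r : E -> M of this extension yields h_x = r_x restricted to N_x satisfying
  M_b h_(src b) = eta_b + h_(tgt b) N_b, i.e. eta is a coboundary.

  For the theorem, assume M_a is neither injective nor surjective: take v != 0 in its
  kernel and w outside its image, and let eta be a rank-one map sending v to w, placed
  at the arrow a and zero elsewhere.  Applying the coboundary identity to v gives
  M_a (h_(src a) v) = w, a contradiction.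
\<close>

lemma mat_eq_by_action:
  fixes A B :: "'k::semiring_1 mat"
  assumes A: "A \<in> carrier_mat m n" and B: "B \<in> carrier_mat m n"
    and act: "\<And>v. v \<in> carrier_vec n \<Longrightarrow> A *\<^sub>v v = B *\<^sub>v v"
  shows "A = B"
proof (rule eq_matI)
  fix i j assume i: "i < dim_row B" and j: "j < dim_col B"
  have "col A j = A *\<^sub>v unit_vec n j"
    using col_mult2[OF A one_carrier_mat, of j] A j B by (simp add: col_one)
  also have "\<dots> = B *\<^sub>v unit_vec n j" by (rule act) simp
  also have "\<dots> = col B j"
    using col_mult2[OF B one_carrier_mat, of j] B j by (simp add: col_one)
  finally show "A $$ (i, j) = B $$ (i, j)"
    using A B i j by (metis carrier_matD index_col)
qed (use A B in auto)

lemma mat_eq_by_block_action: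
  fixes A B :: "'k::semiring_1 mat"
  assumes A: "A \<in> carrier_mat m (n1 + n2)" and B: "B \<in> carrier_mat m (n1 + n2)"
    and act: "\<And>a d. a \<in> carrier_vec n1 \<Longrightarrow> d \<in> carrier_vec n2 \<Longrightarrow> A *\<^sub>v (a @\<^sub>v d) = B *\<^sub>v (a @\<^sub>v d)"
  shows "A = B"
  using A B by (rule mat_eq_by_action) (metis act vec_first_last_append vec_first_carrier vec_last_carrier)

definition inl_mat :: "nat \<Rightarrow> nat \<Rightarrow> 'k::semiring_1 mat" where
  "inl_mat m n = 1\<^sub>m m @\<^sub>r 0\<^sub>m n m"

definition inr_mat :: "nat \<Rightarrow> nat \<Rightarrow> 'k::semiring_1 mat" where
  "inr_mat m n = 0\<^sub>m m n @\<^sub>r 1\<^sub>m n"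

definition snd_mat :: "nat \<Rightarrow> nat \<Rightarrow> 'k::semiring_1 mat" where
  "snd_mat m n = four_block_mat (0\<^sub>m 0 m) (0\<^sub>m 0 n) (0\<^sub>m n m) (1\<^sub>m n)"

lemma inl_mat_carrier [simp]: "inl_mat m n \<in> carrier_mat (m + n) m"
  and inr_mat_carrier [simp]: "inr_mat m n \<in> carrier_mat (m + n) n"
  and snd_mat_carrier [simp]: "snd_mat m n \<in> carrier_mat n (m + n)"
  unfolding inl_mat_def inr_mat_def snd_mat_def
  by auto

lemma inl_mat_action: "u \<in> carrier_vec m \<Longrightarrow> inl_mat m n *\<^sub>v u = u @\<^sub>v 0\<^sub>v n"
  unfolding inl_mat_def by (subst mat_mult_append) auto

lemma inr_mat_action: "v \<in> carrier_vec n \<Longrightarrow> inr_mat m n *\<^sub>v v = 0\<^sub>v m @\<^sub>v (v :: 'k::semiring_1 vec)"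
  unfolding inr_mat_def by (subst mat_mult_append) auto

lemma snd_mat_action:
  "a \<in> carrier_vec m \<Longrightarrow> d \<in> carrier_vec n \<Longrightarrow> snd_mat m n *\<^sub>v (a @\<^sub>v d) = (d :: 'k::semiring_1 vec)"
  unfolding snd_mat_def by (subst four_block_mat_mult_vec) auto

lemma append_vec_add:
  fixes a c :: "'k::monoid_add vec"
  assumes "a \<in> carrier_vec n1" "c \<in> carrier_vec n1" "b \<in> carrier_vec n2" "d \<in> carrier_vec n2"
  shows "(a @\<^sub>v b) + (c @\<^sub>v d) = (a + c) @\<^sub>v (b + d)"
  by (rule eq_vecI) (use assms in auto)

lemma zero_mat_action [simp]:
  "v \<in> carrier_vec n \<Longrightarrow> 0\<^sub>m m n *\<^sub>v v = (0\<^sub>v m :: 'k::semiring_0 vec)"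
  by (rule eq_vecI) auto

lemma mat_action_zero [simp]:
  "A \<in> carrier_mat m n \<Longrightarrow> A *\<^sub>v 0\<^sub>v n = (0\<^sub>v m :: 'k::semiring_0 vec)"
  by (rule eq_vecI) (auto simp: scalar_prod_def)

lemma zero_vec_append: "0\<^sub>v (m + n) = 0\<^sub>v m @\<^sub>v (0\<^sub>v n :: 'k::zero vec)"
  by (rule eq_vecI) auto

lemma direct_sum_exact:
  fixes m n :: nat
  shows "lin_inj m (m + n) (inl_mat m n :: 'k::field mat)"
    and "lin_surj (m + n) n (snd_mat m n :: 'k::field mat)"
    and "snd_mat m n * inl_mat m n = (0\<^sub>m n m :: 'k::field mat)"
    and "\<And>x. x \<in> carrier_vec (m + n) \<Longrightarrow> snd_mat m n *\<^sub>v x = 0\<^sub>v n \<Longrightarrow>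
           \<exists>u \<in> carrier_vec m. inl_mat m n *\<^sub>v u = (x :: 'k::field vec)"
proof -
  show "lin_inj m (m + n) (inl_mat m n :: 'k mat)"
    unfolding lin_inj_def by (auto simp: inl_mat_action zero_vec_append)
  show "lin_surj (m + n) n (snd_mat m n :: 'k mat)"
    unfolding lin_surj_def
    by (metis snd_mat_action zero_carrier_vec append_carrier_vec)
  show "snd_mat m n * inl_mat m n = (0\<^sub>m n m :: 'k mat)"
  proof (rule mat_eq_by_action)
    fix u :: "'k vec" assume u: "u \<in> carrier_vec m"
    have "snd_mat m n * inl_mat m n *\<^sub>v u = snd_mat m n *\<^sub>v (inl_mat m n *\<^sub>v u)"
      by (rule assoc_mult_mat_vec[OF snd_mat_carrier inl_mat_carrier u])
    then show "snd_mat m n * inl_mat m n *\<^sub>v u = 0\<^sub>m n m *\<^sub>v u"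
      using u by (simp add: inl_mat_action snd_mat_action)
  qed (auto intro: mult_carrier_mat[OF snd_mat_carrier inl_mat_carrier])
  fix x :: "'k vec"
  assume "x \<in> carrier_vec (m + n)" and "snd_mat m n *\<^sub>v x = 0\<^sub>v n"
  then have "x = vec_first x m @\<^sub>v 0\<^sub>v n"
    by (metis snd_mat_action vec_first_last_append vec_first_carrier vec_last_carrier)
  then show "\<exists>u \<in> carrier_vec m. inl_mat m n *\<^sub>v u = x"
    by (metis inl_mat_action vec_first_carrier)
qed

lemma rep_carrier: "is_rep src tgt d \<phi> \<Longrightarrow> \<phi> b \<in> carrier_mat (d (tgt b)) (d (src b))"
  unfolding is_rep_def by blast

definition twisted_map :: "('a \<Rightarrow> 'v) \<Rightarrow> ('a \<Rightarrow> 'v) \<Rightarrow> ('v \<Rightarrow> nat) \<Rightarrow> ('a \<Rightarrow> 'k::zero mat)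
    \<Rightarrow> ('v \<Rightarrow> nat) \<Rightarrow> ('a \<Rightarrow> 'k mat) \<Rightarrow> ('a \<Rightarrow> 'k mat) \<Rightarrow> 'a \<Rightarrow> 'k mat" where
  "twisted_map src tgt dM \<phi>M dN \<phi>N \<eta> b =
     four_block_mat (\<phi>M b) (\<eta> b) (0\<^sub>m (dN (tgt b)) (dM (src b))) (\<phi>N b)"

context
  fixes src tgt :: "'a \<Rightarrow> 'v" and dM dN :: "'v \<Rightarrow> nat" and \<phi>M \<phi>N \<eta> :: "'a \<Rightarrow> 'k::field mat"
  assumes M: "is_rep src tgt dM \<phi>M" and N: "is_rep src tgt dN \<phi>N"
    and \<eta>: "\<And>b. \<eta> b \<in> carrier_mat (dM (tgt b)) (dN (src b))"
begin

abbreviation E :: "'a \<Rightarrow> 'k mat" where "E \<equiv> twisted_map src tgt dM \<phi>M dN \<phi>N \<eta>"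

lemma twisted_map_carrier: "E b \<in> carrier_mat (dM (tgt b) + dN (tgt b)) (dM (src b) + dN (src b))"
  unfolding twisted_map_def by (rule four_block_carrier_mat[OF rep_carrier[OF M] rep_carrier[OF N]])

lemma twisted_map_action:
  assumes "a \<in> carrier_vec (dM (src b))" and "d \<in> carrier_vec (dN (src b))"
  shows "E b *\<^sub>v (a @\<^sub>v d) = (\<phi>M b *\<^sub>v a + \<eta> b *\<^sub>v d) @\<^sub>v (\<phi>N b *\<^sub>v d)"
  unfolding twisted_map_def
  using four_block_mat_mult_vec[OF rep_carrier[OF M] \<eta> zero_carrier_mat rep_carrier[OF N] assms]
    mult_mat_vec_carrier[OF rep_carrier[OF N] assms(2)] assms(1)
  by simp

lemma twisted_extension_short_exact:
  shows "is_rep src tgt (\<lambda>x. dM x + dN x) E"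
    and "short_exact src tgt dM \<phi>M (\<lambda>x. dM x + dN x) E dN \<phi>N
           (\<lambda>x. inl_mat (dM x) (dN x)) (\<lambda>x. snd_mat (dM x) (dN x))"
proof -
  show "is_rep src tgt (\<lambda>x. dM x + dN x) E"
    using M N twisted_map_carrier unfolding is_rep_def by auto
  have "E b * inl_mat (dM (src b)) (dN (src b)) = inl_mat (dM (tgt b)) (dN (tgt b)) * \<phi>M b" for b
  proof (rule mat_eq_by_action[where m = "dM (tgt b) + dN (tgt b)"])
    fix u :: "'k vec" assume u: "u \<in> carrier_vec (dM (src b))"
    have "E b * inl_mat (dM (src b)) (dN (src b)) *\<^sub>v u = \<phi>M b *\<^sub>v u @\<^sub>v 0\<^sub>v (dN (tgt b))"
      using u mult_mat_vec_carrier[OF rep_carrier[OF M] u] rep_carrier[OF N, of b] \<eta>[of b]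
      by (simp add: assoc_mult_mat_vec[OF twisted_map_carrier inl_mat_carrier u]
          inl_mat_action twisted_map_action)
    also have "\<dots> = inl_mat (dM (tgt b)) (dN (tgt b)) * \<phi>M b *\<^sub>v u"
      using mult_mat_vec_carrier[OF rep_carrier[OF M] u]
      by (simp add: assoc_mult_mat_vec[OF inl_mat_carrier rep_carrier[OF M] u] inl_mat_action)
    finally show "E b * inl_mat (dM (src b)) (dN (src b)) *\<^sub>v u = inl_mat (dM (tgt b)) (dN (tgt b)) * \<phi>M b *\<^sub>v u" .
  qed (auto intro: mult_carrier_mat[OF twisted_map_carrier inl_mat_carrier]
                   mult_carrier_mat[OF inl_mat_carrier rep_carrier[OF M]])
  moreover have "\<phi>N b * snd_mat (dM (src b)) (dN (src b)) = snd_mat (dM (tgt b)) (dN (tgt b)) * E b" for b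
  proof (rule mat_eq_by_block_action[where m = "dN (tgt b)"])
    fix a d :: "'k vec" assume a: "a \<in> carrier_vec (dM (src b))" and d: "d \<in> carrier_vec (dN (src b))"
    show "\<phi>N b * snd_mat (dM (src b)) (dN (src b)) *\<^sub>v (a @\<^sub>v d) = snd_mat (dM (tgt b)) (dN (tgt b)) * E b *\<^sub>v (a @\<^sub>v d)"
      using a d mult_mat_vec_carrier[OF rep_carrier[OF N] d]
        add_carrier_vec[OF mult_mat_vec_carrier[OF rep_carrier[OF M] a] mult_mat_vec_carrier[OF \<eta> d]]
      by (simp add: assoc_mult_mat_vec[OF rep_carrier[OF N] snd_mat_carrier]
          assoc_mult_mat_vec[OF snd_mat_carrier twisted_map_carrier] snd_mat_action twisted_map_action)
  qed (auto intro: mult_carrier_mat[OF rep_carrier[OF N] snd_mat_carrier]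
                   mult_carrier_mat[OF snd_mat_carrier twisted_map_carrier])
  ultimately show "short_exact src tgt dM \<phi>M (\<lambda>x. dM x + dN x) E dN \<phi>N
           (\<lambda>x. inl_mat (dM x) (dN x)) (\<lambda>x. snd_mat (dM x) (dN x))"
    unfolding short_exact_def is_morph_def using direct_sum_exact by auto
qed

text \<open>Key computation: a retraction r of M -> E, applied to E_b (0, v) = (eta_b v, N_b v),
  exhibits eta_b v as M_b r(0, v) - r(0, N_b v).\<close>
lemma retraction_coboundary:
  assumes r_morph: "is_morph src tgt (\<lambda>x. dM x + dN x) E dM \<phi>M r"
    and r_retract: "\<And>x. r x * inl_mat (dM x) (dN x) = 1\<^sub>m (dM x)"
    and v: "v \<in> carrier_vec (dN (src b))"
  shows "\<phi>M b *\<^sub>v (r (src b) *\<^sub>v (0\<^sub>v (dM (src b)) @\<^sub>v v))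
           = \<eta> b *\<^sub>v v + r (tgt b) *\<^sub>v (0\<^sub>v (dM (tgt b)) @\<^sub>v (\<phi>N b *\<^sub>v v))"
proof -
  let ?s = "src b" and ?t = "tgt b"
  have r: "r x \<in> carrier_mat (dM x) (dM x + dN x)" for x
    using r_morph unfolding is_morph_def by blast
  have comm: "\<phi>M b * r ?s = r ?t * E b"
    using r_morph unfolding is_morph_def by blast
  have \<eta>v: "\<eta> b *\<^sub>v v \<in> carrier_vec (dM ?t)" and \<phi>v: "\<phi>N b *\<^sub>v v \<in> carrier_vec (dN ?t)"
    using mult_mat_vec_carrier[OF \<eta> v] mult_mat_vec_carrier[OF rep_carrier[OF N] v] by auto
  have x: "0\<^sub>v (dM ?s) @\<^sub>v v \<in> carrier_vec (dM ?s + dN ?s)" and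
       y: "0\<^sub>v (dM ?t) @\<^sub>v (\<phi>N b *\<^sub>v v) \<in> carrier_vec (dM ?t + dN ?t)"
    using v \<phi>v by auto
  have image: "E b *\<^sub>v (0\<^sub>v (dM ?s) @\<^sub>v v)
      = inl_mat (dM ?t) (dN ?t) *\<^sub>v (\<eta> b *\<^sub>v v) + (0\<^sub>v (dM ?t) @\<^sub>v (\<phi>N b *\<^sub>v v))"
    using v \<eta>v \<phi>v mat_action_zero[OF rep_carrier[OF M]]
    by (simp add: twisted_map_action inl_mat_action append_vec_add[of _ "dM ?t" _ _ "dN ?t"])
  have "\<phi>M b *\<^sub>v (r ?s *\<^sub>v (0\<^sub>v (dM ?s) @\<^sub>v v)) = (r ?t * E b) *\<^sub>v (0\<^sub>v (dM ?s) @\<^sub>v v)"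
    by (simp add: assoc_mult_mat_vec[OF rep_carrier[OF M] r x, symmetric] comm)
  also have "\<dots> = r ?t *\<^sub>v (inl_mat (dM ?t) (dN ?t) *\<^sub>v (\<eta> b *\<^sub>v v))
      + r ?t *\<^sub>v (0\<^sub>v (dM ?t) @\<^sub>v (\<phi>N b *\<^sub>v v))"
    using mult_mat_vec_carrier[OF inl_mat_carrier \<eta>v] y
    by (simp add: assoc_mult_mat_vec[OF r twisted_map_carrier x] image mult_add_distrib_mat_vec[OF r])
  also have "r ?t *\<^sub>v (inl_mat (dM ?t) (dN ?t) *\<^sub>v (\<eta> b *\<^sub>v v)) = \<eta> b *\<^sub>v v"
    using \<eta>v by (simp add: assoc_mult_mat_vec[OF r inl_mat_carrier \<eta>v, symmetric] r_retract)
  finally show ?thesis .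
qed

lemma ext1_vanishes_coboundary:
  assumes "ext1_vanishes src tgt dN \<phi>N dM \<phi>M"
  obtains h where "\<And>x. h x \<in> carrier_mat (dM x) (dN x)"
    and "\<And>b v. v \<in> carrier_vec (dN (src b)) \<Longrightarrow>
           \<phi>M b *\<^sub>v (h (src b) *\<^sub>v v) = \<eta> b *\<^sub>v v + h (tgt b) *\<^sub>v (\<phi>N b *\<^sub>v v)"
proof -
  obtain r where r_morph: "is_morph src tgt (\<lambda>x. dM x + dN x) E dM \<phi>M r"
    and r_retract: "\<And>x. r x * inl_mat (dM x) (dN x) = 1\<^sub>m (dM x)"
    using assms twisted_extension_short_exact unfolding ext1_vanishes_def by blast
  have r: "r x \<in> carrier_mat (dM x) (dM x + dN x)" for x
    using r_morph unfolding is_morph_def by blast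
  define h where "h x = r x * inr_mat (dM x) (dN x)" for x
  have h_action: "h x *\<^sub>v v = r x *\<^sub>v (0\<^sub>v (dM x) @\<^sub>v v)" if "v \<in> carrier_vec (dN x)" for x v
    using that by (simp add: h_def assoc_mult_mat_vec[OF r inr_mat_carrier that] inr_mat_action)
  show thesis
  proof
    show "h x \<in> carrier_mat (dM x) (dN x)" for x
      unfolding h_def using r inr_mat_carrier by (rule mult_carrier_mat)
    show "\<phi>M b *\<^sub>v (h (src b) *\<^sub>v v) = \<eta> b *\<^sub>v v + h (tgt b) *\<^sub>v (\<phi>N b *\<^sub>v v)"
      if "v \<in> carrier_vec (dN (src b))" for b v
      using retraction_coboundary[OF r_morph r_retract that]
      by (simp add: h_action that mult_mat_vec_carrier[OF rep_carrier[OF N] that])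
  qed
qed

end


lemma rank_one_map:
  fixes v w :: "'k::field vec"
  assumes v: "v \<in> carrier_vec n" "v \<noteq> 0\<^sub>v n" and w: "w \<in> carrier_vec m"
  obtains \<eta> where "\<eta> \<in> carrier_mat m n" and "\<eta> *\<^sub>v v = w"
proof -
  obtain i where i: "i < n" "v $ i \<noteq> 0"
    using v by (metis eq_vecI carrier_vecD index_zero_vec(1,2))
  define \<eta> where "\<eta> = mat m n (\<lambda>(r, c). if c = i then w $ r / v $ i else 0)"
  have "\<eta> *\<^sub>v v = w"
  proof (rule eq_vecI)
    fix r assume r: "r < dim_vec w"
    have "(\<eta> *\<^sub>v v) $ r = (\<Sum>c\<in>{0..<n}. (if c = i then w $ r / v $ i else 0) * v $ c)"
      using r w v(1) by (simp add: \<eta>_def scalar_prod_def)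
    also have "\<dots> = (\<Sum>c\<in>{0..<n}. if c = i then w $ r / v $ i * v $ c else 0)"
      by (rule sum.cong) auto
    also have "\<dots> = w $ r"
      using i by (simp add: sum.delta')
    finally show "(\<eta> *\<^sub>v v) $ r = w $ r" .
  qed (use w in \<open>simp add: \<eta>_def\<close>)
  moreover have "\<eta> \<in> carrier_mat m n"
    by (simp add: \<eta>_def)
  ultimately show thesis
    using that by blast
qed

theorem lemma2:
  fixes src tgt :: "'a \<Rightarrow> 'v" and d :: "'v \<Rightarrow> nat" and \<phi> :: "'a \<Rightarrow> 'k::field mat"
  assumes "locally_finite_quiver src tgt"
    and "is_rep src tgt d \<phi>"
    and "ext1_vanishes src tgt d \<phi> d \<phi>"
  shows "\<forall>a. lin_inj (d (src a)) (d (tgt a)) (\<phi> a) \<or> lin_surj (d (src a)) (d (tgt a)) (\<phi> a)"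
proof (intro allI)
  fix a
  let ?s = "src a" and ?t = "tgt a"
  show "lin_inj (d ?s) (d ?t) (\<phi> a) \<or> lin_surj (d ?s) (d ?t) (\<phi> a)"
  proof (rule ccontr)
    assume neither: "\<not> (lin_inj (d ?s) (d ?t) (\<phi> a) \<or> lin_surj (d ?s) (d ?t) (\<phi> a))"
    obtain v where v: "v \<in> carrier_vec (d ?s)" "v \<noteq> 0\<^sub>v (d ?s)" and ker: "\<phi> a *\<^sub>v v = 0\<^sub>v (d ?t)"
      using neither unfolding lin_inj_def by blast
    obtain w where w: "w \<in> carrier_vec (d ?t)"
      and not_image: "\<And>u. u \<in> carrier_vec (d ?s) \<Longrightarrow> \<phi> a *\<^sub>v u \<noteq> w"
      using neither unfolding lin_surj_def by blast
    obtain \<eta>\<^sub>a where \<eta>\<^sub>a: "\<eta>\<^sub>a \<in> carrier_mat (d ?t) (d ?s)" "\<eta>\<^sub>a *\<^sub>v v = w"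
      using rank_one_map[OF v w] .
    define \<eta> where "\<eta> b = (if b = a then \<eta>\<^sub>a else 0\<^sub>m (d (tgt b)) (d (src b)))" for b
    have \<eta>_carrier: "\<eta> b \<in> carrier_mat (d (tgt b)) (d (src b))" for b
      using \<eta>\<^sub>a by (simp add: \<eta>_def)
    obtain h where h: "\<And>x. h x \<in> carrier_mat (d x) (d x)"
      and cobound: "\<And>b u. u \<in> carrier_vec (d (src b)) \<Longrightarrow>
           \<phi> b *\<^sub>v (h (src b) *\<^sub>v u) = \<eta> b *\<^sub>v u + h (tgt b) *\<^sub>v (\<phi> b *\<^sub>v u)"
      using ext1_vanishes_coboundary[OF assms(2) assms(2) \<eta>_carrier assms(3)] by blast
    have "\<phi> a *\<^sub>v (h ?s *\<^sub>v v) = w"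
      using cobound[OF v(1)] \<eta>\<^sub>a w by (simp add: \<eta>_def ker mat_action_zero[OF h])
    then show False
      using not_image mult_mat_vec_carrier[OF h v(1)] by blast
  qed
qed

end
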